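(* Let $n$ be a nonnegative integer and $0<\pi<1$. Let $(Y,T)$ be the pair of random variables with joint probability mass function $$P(Y=k,T=t)=\#\mathcal{P}_{k,n-k}(t)\,(1-\pi)^{n-k}\pi^k$$ for $k=0,1,\dots,n$ and $t=0,1,\dots,k(n-k)$, and $0$ otherwise. Then $$E(YT)=\binom{n}{2}\pi(1-\pi)\bigl(\pi(n-2)+1\bigr),\qquad \operatorname{Cov}(Y,T)=\binom{n}{2}\pi(1-\pi)(1-2\pi).$$
   Context: For integers $k\ge0$ and $m\ge 0$, $\#\mathcal{P}_{k,m}(t)$ denotes the number of integer tuples $(\lambda_1,\dots,\lambda_k)$ with $m\ge\lambda_1\ge\cdots\ge\lambda_k\ge0$ and $\lambda_1+\cdots+\lambda_k=t$. Interpretation: in $n$ independent Bernoulli trials each with success probability $\pi$, $Y$ is the number of successes and $T$ is the number of pairs (success, later failure) in the outcome sequence. *)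

theory Defs
  imports Complex_Main
begin

definition numP :: "nat \<Rightarrow> nat \<Rightarrow> nat \<Rightarrow> nat" where
  "numP k m t = card {xs :: nat list. length xs = k \<and> sorted_wrt (\<ge>) xs \<and>
                        (\<forall>x\<in>set xs. x \<le> m) \<and> sum_list xs = t}"

definition jointPMF :: "nat \<Rightarrow> real \<Rightarrow> nat \<Rightarrow> nat \<Rightarrow> real" where
  "jointPMF n p k t =
     (if k \<le> n \<and> t \<le> k * (n - k)
      then real (numP k (n - k) t) * (1 - p) ^ (n - k) * p ^ k else 0)"

definition expect :: "nat \<Rightarrow> real \<Rightarrow> (nat \<Rightarrow> nat \<Rightarrow> real) \<Rightarrow> real" where
  "expect n p f = (\<Sum>k = 0..n. \<Sum>t = 0..k * (n - k). f k t * jointPMF n p k t)"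

definition covYT :: "nat \<Rightarrow> real \<Rightarrow> real" where
  "covYT n p = expect n p (\<lambda>k t. real k * real t)
               - expect n p (\<lambda>k t. real k) * expect n p (\<lambda>k t. real t)"

end

theory Submission
  imports Defs
begin

text \<open>Given \<open>Y = k\<close>, the weight \<open>numP k (n - k) t\<close> says that \<open>T\<close> is the size of a partition
  drawn uniformly from the partitions fitting in a \<open>k \<times> (n - k)\<close> box, of which there are
  \<open>n choose k\<close>. Complementing a partition inside the box is a size-reversing involution, so the
  conditional mean of \<open>T\<close> is \<open>k (n - k) / 2\<close>. Hence \<open>E(Y T)\<close> and \<open>E T\<close> are binomial moments of the
  polynomials \<open>k\<^sup>2 (n - k) / 2\<close> and \<open>k (n - k) / 2\<close>; expanding these in the basis \<open>k choose j\<close> and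
  using \<open>E (Y choose j) = (n choose j) p\<^sup>j\<close> gives the result. Everything is polynomial in \<open>p\<close>.\<close>

definition box_partitions :: "nat \<Rightarrow> nat \<Rightarrow> nat list set" where
  "box_partitions k m = {xs. length xs = k \<and> sorted_wrt (\<ge>) xs \<and> (\<forall>x\<in>set xs. x \<le> m)}"

lemma finite_box_partitions: "finite (box_partitions k m)"
proof (rule finite_subset)
  show "box_partitions k m \<subseteq> {xs. set xs \<subseteq> {0..m} \<and> length xs = k}"
    unfolding box_partitions_def by auto
  show "finite {xs. set xs \<subseteq> {0..m} \<and> length xs = k}"
    by (rule finite_lists_length_eq) simp
qed

lemma box_partitions_Suc: "box_partitions (Suc k) m = (\<Union>j\<le>m. (#) j ` box_partitions k j)"
proof
  show "box_partitions (Suc k) m \<subseteq> (\<Union>j\<le>m. (#) j ` box_partitions k j)"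
  proof
    fix xs assume "xs \<in> box_partitions (Suc k) m"
    then obtain x ys where "xs = x # ys" "x \<le> m" "ys \<in> box_partitions k x"
      unfolding box_partitions_def by (cases xs) auto
    then show "xs \<in> (\<Union>j\<le>m. (#) j ` box_partitions k j)" by auto
  qed
  show "(\<Union>j\<le>m. (#) j ` box_partitions k j) \<subseteq> box_partitions (Suc k) m"
    unfolding box_partitions_def by (auto intro: order_trans)
qed

lemma card_box_partitions: "card (box_partitions k m) = (k + m) choose k"
proof (induction k arbitrary: m)
  case 0
  have "box_partitions 0 m = {[]}" unfolding box_partitions_def by auto
  then show ?case by simp
next
  case (Suc k)
  have "card (box_partitions (Suc k) m) = (\<Sum>j\<le>m. card ((#) j ` box_partitions k j))"
    unfolding box_partitions_Suc
    by (rule card_UN_disjoint) (auto simp: finite_box_partitions)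
  also have "\<dots> = (\<Sum>j\<le>m. (k + j) choose j)"
    by (rule sum.cong) (auto simp: card_image Suc binomial_symmetric[of k "k + j" for j])
  also have "\<dots> = Suc (k + m) choose m" by (rule sum_choose_lower)
  also have "\<dots> = (Suc k + m) choose Suc k"
    using binomial_symmetric[of m "Suc k + m"] by simp
  finally show ?case .
qed

lemma sum_list_le_length_mult: "\<forall>x\<in>set xs. x \<le> m \<Longrightarrow> sum_list xs \<le> length xs * (m :: nat)"
  by (induction xs) auto

lemma sum_list_complement: "\<forall>x\<in>set xs. x \<le> m \<Longrightarrow>
    sum_list (map (\<lambda>x. m - x) xs) + sum_list xs = length xs * (m :: nat)"
  by (induction xs) auto

lemma sum_sum_list_box_partitions:
  "2 * (\<Sum>xs\<in>box_partitions k m. sum_list xs) = k * m * card (box_partitions k m)"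
proof -
  define c where "c xs = rev (map (\<lambda>x. m - x) xs)" for xs
  have bounded: "\<forall>x\<in>set xs. x \<le> m" "length xs = k" if "xs \<in> box_partitions k m" for xs
    using that unfolding box_partitions_def by auto
  have c_box: "c xs \<in> box_partitions k m" if "xs \<in> box_partitions k m" for xs
    using that unfolding c_def box_partitions_def
    by (auto simp: sorted_wrt_rev sorted_wrt_map elim!: sorted_wrt_mono_rel[rotated])
  have c_c: "c (c xs) = xs" if "xs \<in> box_partitions k m" for xs
  proof -
    have "map ((\<lambda>x. m - x) \<circ> (\<lambda>x. m - x)) xs = map id xs"
      using bounded[OF that] by (intro map_cong) auto
    then show ?thesis unfolding c_def by (simp add: rev_map)
  qed
  have "(\<Sum>xs\<in>box_partitions k m. sum_list (c xs)) = (\<Sum>xs\<in>box_partitions k m. sum_list xs)"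
    by (rule sum.reindex_bij_witness[of _ c c]) (auto simp: c_box c_c)
  then have "2 * (\<Sum>xs\<in>box_partitions k m. sum_list xs)
      = (\<Sum>xs\<in>box_partitions k m. sum_list (c xs) + sum_list xs)"
    by (simp add: sum.distrib)
  also have "\<dots> = (\<Sum>xs\<in>box_partitions k m. k * m)"
    by (rule sum.cong) (simp_all add: c_def sum_list_complement bounded)
  finally show ?thesis by simp
qed

lemma sum_numP:
  "(\<Sum>t = 0..k * m. of_nat (numP k m t) * h t) = (\<Sum>xs\<in>box_partitions k m. h (sum_list xs))"
proof -
  have "(\<Sum>xs\<in>box_partitions k m. h (sum_list xs)) =
        (\<Sum>t = 0..k * m. \<Sum>xs\<in>{xs \<in> box_partitions k m. sum_list xs = t}. h (sum_list xs))"
    by (rule sum.group[symmetric]) (use finite_box_partitions in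
      \<open>auto simp: box_partitions_def intro: sum_list_le_length_mult\<close>)
  also have "\<dots> = (\<Sum>t = 0..k * m. of_nat (numP k m t) * h t)"
    unfolding numP_def box_partitions_def by (intro sum.cong) (auto intro!: arg_cong[where f = card])
  finally show ?thesis by simp
qed

definition binomial_expectation :: "nat \<Rightarrow> real \<Rightarrow> (nat \<Rightarrow> real) \<Rightarrow> real" where
  "binomial_expectation n p f = (\<Sum>k\<le>n. real (n choose k) * p ^ k * (1 - p) ^ (n - k) * f k)"

lemma binomial_expectation_cong:
  "(\<And>k. k \<le> n \<Longrightarrow> f k = g k) \<Longrightarrow> binomial_expectation n p f = binomial_expectation n p g"
  unfolding binomial_expectation_def by (rule sum.cong) auto

lemma binomial_expectation_add:
  "binomial_expectation n p (\<lambda>k. f k + g k) = binomial_expectation n p f + binomial_expectation n p g"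
  unfolding binomial_expectation_def by (simp add: algebra_simps sum.distrib)

lemma binomial_expectation_diff:
  "binomial_expectation n p (\<lambda>k. f k - g k) = binomial_expectation n p f - binomial_expectation n p g"
  unfolding binomial_expectation_def by (simp add: algebra_simps sum_subtractf)

lemma binomial_expectation_scale:
  "binomial_expectation n p (\<lambda>k. c * f k) = c * binomial_expectation n p f"
  unfolding binomial_expectation_def by (simp add: algebra_simps sum_distrib_left)

lemma binomial_expectation_Suc:
  "binomial_expectation (Suc n) p f
     = (1 - p) * binomial_expectation n p f + p * binomial_expectation n p (\<lambda>k. f (Suc k))"
proof -
  let ?a = "\<lambda>k. real (n choose k) * p ^ k * (1 - p) ^ (Suc n - k) * f k"
  have "binomial_expectation (Suc n) p f = (1 - p) ^ Suc n * f 0 +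
     (\<Sum>k\<le>n. real (Suc n choose Suc k) * p ^ Suc k * (1 - p) ^ (n - k) * f (Suc k))"
    unfolding binomial_expectation_def by (subst sum.atMost_Suc_shift) simp
  also have "\<dots> = ?a 0 + (\<Sum>k\<le>n. ?a (Suc k)) +
      p * (\<Sum>k\<le>n. real (n choose k) * p ^ k * (1 - p) ^ (n - k) * f (Suc k))"
    by (simp add: sum.distrib sum_distrib_left algebra_simps)
  also have "?a 0 + (\<Sum>k\<le>n. ?a (Suc k)) = (\<Sum>k\<le>n. ?a k)"
    by (subst sum.atMost_Suc_shift[symmetric]) simp
  also have "\<dots> = (1 - p) * binomial_expectation n p f"
    unfolding binomial_expectation_def sum_distrib_left by (rule sum.cong) (auto simp: Suc_diff_le)
  finally show ?thesis unfolding binomial_expectation_def .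
qed

lemma binomial_expectation_choose:
  "binomial_expectation n p (\<lambda>k. real (k choose j)) = real (n choose j) * p ^ j"
proof (induction n arbitrary: j)
  case 0
  show ?case by (cases j) (simp_all add: binomial_expectation_def)
next
  case (Suc n)
  note IH = Suc.IH
  show ?case
  proof (cases j)
    case 0
    then show ?thesis using IH[of 0] by (simp add: binomial_expectation_Suc)
  next
    case (Suc i)
    have "binomial_expectation n p (\<lambda>k. real (Suc k choose Suc i))
        = binomial_expectation n p (\<lambda>k. real (k choose i) + real (k choose Suc i))"
      by (rule binomial_expectation_cong) simp
    then show ?thesis
      using IH[of i] IH[of "Suc i"]
      by (simp add: Suc binomial_expectation_Suc binomial_expectation_add algebra_simps)
  qed
qed

lemma real_choose_two: "real (k choose 2) = real k * (real k - 1) / 2"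
  by (simp add: binomial_gbinomial gbinomial_prod_rev numeral_2_eq_2 prod.atLeast0_lessThan_Suc)

lemma real_choose_three: "real (k choose 3) = real k * (real k - 1) * (real k - 2) / 6"
  by (simp add: binomial_gbinomial gbinomial_prod_rev numeral_3_eq_3 prod.atLeast0_lessThan_Suc
      fact_numeral)

lemma sum_jointPMF:
  assumes "k \<le> n"
  shows "(\<Sum>t = 0..k * (n - k). f t * jointPMF n p k t)
      = p ^ k * (1 - p) ^ (n - k) * (\<Sum>xs\<in>box_partitions k (n - k). f (sum_list xs))"
proof -
  have "(\<Sum>t = 0..k * (n - k). f t * jointPMF n p k t)
      = (\<Sum>t = 0..k * (n - k). real (numP k (n - k) t) * f t) * (p ^ k * (1 - p) ^ (n - k))"
    unfolding sum_distrib_right jointPMF_def using assms by (intro sum.cong) auto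
  then show ?thesis by (simp add: sum_numP)
qed

lemma expect_eq_binomial_expectation:
  "expect n p f = binomial_expectation n p
     (\<lambda>k. (\<Sum>xs\<in>box_partitions k (n - k). f k (sum_list xs)) / card (box_partitions k (n - k)))"
  unfolding expect_def binomial_expectation_def atLeast0AtMost[symmetric]
  by (intro sum.cong) (auto simp: sum_jointPMF card_box_partitions)

lemma expect_fun_Y: "expect n p (\<lambda>k t. g k) = binomial_expectation n p g"
  unfolding expect_eq_binomial_expectation
  by (intro binomial_expectation_cong) (simp add: card_box_partitions)

lemma expect_fun_Y_mult_T:
  "expect n p (\<lambda>k t. g k * real t) = binomial_expectation n p (\<lambda>k. g k * real (k * (n - k)) / 2)"
proof -
  have conditional_mean: "(\<Sum>xs\<in>box_partitions k m. g k * real (sum_list xs))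
      / card (box_partitions k m) = g k * real (k * m) / 2" for k m
    using arg_cong[OF sum_sum_list_box_partitions[of k m], of real]
    by (simp add: sum_distrib_left[symmetric] card_box_partitions field_simps)
  show ?thesis
    by (simp only: expect_eq_binomial_expectation conditional_mean)
qed

lemma expect_Y: "expect n p (\<lambda>k t. real k) = real n * p"
  using binomial_expectation_choose[of n p 1] by (simp add: expect_fun_Y)

lemma expect_T: "expect n p (\<lambda>k t. real t) = real (n choose 2) * p * (1 - p)"
proof -
  have "expect n p (\<lambda>k t. real t) = expect n p (\<lambda>k t. 1 * real t)" by simp
  also have "\<dots> = binomial_expectation n p
      (\<lambda>k. (real n - 1) / 2 * real (k choose 1) - real (k choose 2))"
    unfolding expect_fun_Y_mult_T
    by (intro binomial_expectation_cong) (simp add: real_choose_two of_nat_diff field_simps)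
  also have "\<dots> = real (n choose 2) * p * (1 - p)"
    unfolding binomial_expectation_diff binomial_expectation_scale binomial_expectation_choose
    by (simp add: real_choose_two power2_eq_square field_simps)
  finally show ?thesis .
qed

lemma expect_YT:
  "expect n p (\<lambda>k t. real k * real t) = real (n choose 2) * p * (1 - p) * (p * (real n - 2) + 1)"
proof -
  have "expect n p (\<lambda>k t. real k * real t) = binomial_expectation n p
      (\<lambda>k. (real n - 1) / 2 * real (k choose 1) + (real n - 3) * real (k choose 2)
         - 3 * real (k choose 3))"
    unfolding expect_fun_Y_mult_T
    by (intro binomial_expectation_cong)
      (simp add: real_choose_two real_choose_three of_nat_diff field_simps)
  also have "\<dots> = real (n choose 2) * p * (1 - p) * (p * (real n - 2) + 1)"
    unfolding binomial_expectation_diff binomial_expectation_add binomial_expectation_scale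
      binomial_expectation_choose
    by (simp add: real_choose_two real_choose_three power2_eq_square power3_eq_cube field_simps)
  finally show ?thesis .
qed

theorem theorem3:
  fixes n :: nat and p :: real
  assumes "0 < p" and "p < 1"
  shows "expect n p (\<lambda>k t. real k * real t)
           = real (n choose 2) * p * (1 - p) * (p * (real n - 2) + 1)
         \<and> covYT n p = real (n choose 2) * p * (1 - p) * (1 - 2 * p)"
proof
  show "expect n p (\<lambda>k t. real k * real t)
      = real (n choose 2) * p * (1 - p) * (p * (real n - 2) + 1)"
    by (rule expect_YT)
  show "covYT n p = real (n choose 2) * p * (1 - p) * (1 - 2 * p)"
    unfolding covYT_def expect_YT expect_Y expect_T by (simp add: algebra_simps)
qed

end
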